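(* Let $X$ be a metric space with an $(n-1)$-dimensional control function $D_X^{n-1}:\mathbb{R}_+\to\mathbb{R}_+\cup\{\infty\}$, where $n\ge1$. If $r>0$ and $f:\{0,1,\ldots,k\}^n\to X$ is an $r$-cube, then $k\le D_X^{n-1}(n\cdot r)\cdot \mathrm{Lip}(f^{-1})$.
   Context: $\{0,\ldots,k\}^n$ carries the $\ell_1$-metric, and $\mathrm{Lip}(f^{-1})$ denotes the Lipschitz constant of the inverse of $f$ onto its image, i.e. the least $L\in[0,\infty]$ with $\|a-b\|_1\le L\cdot\mathrm{dist}(f(a),f(b))$ for all $a,b$. An $r$-cube in $X$ is a function $f:\{0,\ldots,k\}^n\to X$ with $\mathrm{dist}(f(x),f(x+e_i))<r$ whenever $x,x+e_i\in\{0,\ldots,k\}^n$. For $Y\subseteq X$, $r$-components of $Y$ are classes of points joined by sequences in $Y$ with consecutive distances $<r$. An $m$-dimensional control function of $X$ is $D:\mathbb{R}_+\to\mathbb{R}_+\cup\{\infty\}$ such that for each $r>0$ there is a cover $\{X_0,\dots,X_m\}$ of $X$ such that every open ball $B(x,r)$ lies in some $X_i$ and every $r$-component of each $X_i$ has diameter at most $D(r)$. *)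

theory Defs
  imports "HOL-Analysis.Analysis"
begin

text \<open>The discrete cube {0,...,k}^n, points represented as functions nat => nat
  that vanish outside the coordinates 0..n-1.\<close>
definition grid :: "nat \<Rightarrow> nat \<Rightarrow> (nat \<Rightarrow> nat) set" where
  "grid n k = {a. (\<forall>i<n. a i \<le> k) \<and> (\<forall>i\<ge>n. a i = 0)}"

definition l1dist :: "nat \<Rightarrow> (nat \<Rightarrow> nat) \<Rightarrow> (nat \<Rightarrow> nat) \<Rightarrow> real" where
  "l1dist n a b = (\<Sum>i<n. \<bar>real (a i) - real (b i)\<bar>)"

definition shift :: "(nat \<Rightarrow> nat) \<Rightarrow> nat \<Rightarrow> (nat \<Rightarrow> nat)" where
  "shift a i = a(i := Suc (a i))"

definition r_cube :: "'a::metric_space set \<Rightarrow> real \<Rightarrow> nat \<Rightarrow> nat \<Rightarrow> ((nat \<Rightarrow> nat) \<Rightarrow> 'a) \<Rightarrow> bool" where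
  "r_cube X r n k f \<longleftrightarrow> (\<forall>a\<in>grid n k. f a \<in> X) \<and>
     (\<forall>a\<in>grid n k. \<forall>i<n. shift a i \<in> grid n k \<longrightarrow> dist (f a) (f (shift a i)) < r)"

text \<open>Lipschitz constant of the inverse of f onto its image (value in [0,\<infinity>]).\<close>
definition lip_inv :: "nat \<Rightarrow> nat \<Rightarrow> ((nat \<Rightarrow> nat) \<Rightarrow> 'a::metric_space) \<Rightarrow> ennreal" where
  "lip_inv n k f = Inf {L. \<forall>a\<in>grid n k. \<forall>b\<in>grid n k.
       ennreal (l1dist n a b) \<le> L * ennreal (dist (f a) (f b))}"

definition r_component :: "'a::metric_space set \<Rightarrow> real \<Rightarrow> 'a \<Rightarrow> 'a set" where
  "r_component Y r x = {y. (\<lambda>p q. p \<in> Y \<and> q \<in> Y \<and> dist p q < r)\<^sup>*\<^sup>* x y}"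

definition ediam :: "'a::metric_space set \<Rightarrow> ennreal" where
  "ediam S = (SUP p\<in>S \<times> S. ennreal (dist (fst p) (snd p)))"

definition control_function :: "'a::metric_space set \<Rightarrow> nat \<Rightarrow> (real \<Rightarrow> ennreal) \<Rightarrow> bool" where
  "control_function X m D \<longleftrightarrow> (\<forall>r>0. \<exists>U :: nat \<Rightarrow> 'a set.
      (\<forall>i\<le>m. U i \<subseteq> X) \<and> (\<Union>i\<le>m. U i) = X \<and>
      (\<forall>x\<in>X. \<exists>i\<le>m. ball x r \<inter> X \<subseteq> U i) \<and>
      (\<forall>i\<le>m. \<forall>x\<in>U i. ediam (r_component (U i) r x) \<le> D r))"

end

theory Submission
  imports Defs
begin

text \<open>Take the cover U 0, ..., U (n - 1) of X provided by the control function at scale n r and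
  colour each grid point a by an index i with f a in U i. By the n-dimensional Hex theorem, which
  follows from Kuhn's lemma, some colour i admits a path of colour i from the face x_i = 0 to the
  face x_i = k whose consecutive points differ by at most 1 in every coordinate. Such neighbours are
  at l1-distance at most n, so f maps the path to an (n r)-chain in U i. Hence its endpoints a, b
  satisfy dist (f a) (f b) <= D (n r), while |a - b|_1 >= k, and the definition of Lip(f^-1)
  gives k <= D (n r) Lip(f^-1).\<close>

lemma grid_eqI:
  assumes "a \<in> grid n k" "b \<in> grid n k" "\<And>i. i < n \<Longrightarrow> a i = b i"
  shows "a = b"
proof
  show "a i = b i" for i
    using assms by (cases "i < n") (auto simp: grid_def)
qed

lemma l1dist_eq_of_nat:
  "l1dist n a b = real (\<Sum>i<n. (a i - b i) + (b i - a i))"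
  unfolding l1dist_def of_nat_sum by (rule sum.cong) (auto simp: of_nat_diff)

lemma l1dist_eq_0_iff_on_grid:
  assumes "a \<in> grid n k" "b \<in> grid n k"
  shows "l1dist n a b = 0 \<longleftrightarrow> a = b"
proof
  assume "l1dist n a b = 0"
  then show "a = b"
    using assms by (intro grid_eqI) (auto simp: l1dist_def sum_nonneg_eq_0_iff)
qed (simp add: l1dist_def)

lemma coordinate_dist_le_l1dist:
  "i < n \<Longrightarrow> \<bar>real (a i) - real (b i)\<bar> \<le> l1dist n a b"
  unfolding l1dist_def by (rule member_le_sum) auto

lemma grid_step_towards:
  assumes a: "a \<in> grid n k" and b: "b \<in> grid n k" and "a \<noteq> b"
  obtains j a' where "j < n" "a' \<in> grid n k" "a' = shift a j \<or> a = shift a' j"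
    "l1dist n a' b = l1dist n a b - 1"
proof -
  obtain j where j: "j < n" "a j \<noteq> b j"
    using grid_eqI[OF a b] \<open>a \<noteq> b\<close> by blast
  define a' where "a' = a(j := if a j < b j then Suc (a j) else a j - 1)"
  have "a' \<in> grid n k"
    using a b j unfolding a'_def grid_def by auto
  moreover have "a' = shift a j \<or> a = shift a' j"
    using j by (auto simp: a'_def shift_def)
  moreover have "l1dist n a' b = l1dist n a b - 1"
  proof -
    have "\<bar>real (a' j) - real (b j)\<bar> = \<bar>real (a j) - real (b j)\<bar> - 1"
      using j by (auto simp: a'_def of_nat_diff)
    moreover have "(\<Sum>i\<in>{..<n} - {j}. \<bar>real (a' i) - real (b i)\<bar>)
        = (\<Sum>i\<in>{..<n} - {j}. \<bar>real (a i) - real (b i)\<bar>)"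
      by (rule sum.cong) (auto simp: a'_def)
    ultimately show ?thesis
      using j unfolding l1dist_def by (simp add: sum.remove[of "{..<n}" j])
  qed
  ultimately show ?thesis
    using j that by blast
qed

lemma r_cube_dist_less_l1dist:
  assumes cube: "r_cube X r n k f" and a: "a \<in> grid n k" and b: "b \<in> grid n k" and "a \<noteq> b"
  shows "dist (f a) (f b) < r * l1dist n a b"
proof -
  obtain m where "l1dist n a b = real m"
    using l1dist_eq_of_nat by blast
  with a \<open>a \<noteq> b\<close> show ?thesis
  proof (induction m arbitrary: a)
    case 0
    then show ?case
      using l1dist_eq_0_iff_on_grid[OF _ b] by simp
  next
    case (Suc m)
    obtain j a' where j: "j < n" and a': "a' \<in> grid n k" "a' = shift a j \<or> a = shift a' j"
      and l1: "l1dist n a' b = l1dist n a b - 1"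
      using grid_step_towards[OF Suc.prems(1) b Suc.prems(2)] .
    have step: "dist (f a) (f a') < r"
      using cube a' j Suc.prems(1) unfolding r_cube_def by (metis dist_commute)
    then have "r > 0"
      using zero_le_dist le_less_trans by blast
    show ?case
    proof (cases "a' = b")
      case True
      have "r \<le> r * l1dist n a b"
        using \<open>r > 0\<close> Suc.prems(3) by simp
      then show ?thesis
        using step True by simp
    next
      case False
      have "dist (f a') (f b) < r * real m"
        using Suc.IH[OF a'(1) False] l1 Suc.prems(3) by simp
      then show ?thesis
        using step dist_triangle[of "f a" "f b" "f a'"] Suc.prems(3) by (simp add: algebra_simps)
    qed
  qed
qed

definition king_adjacent :: "nat \<Rightarrow> (nat \<Rightarrow> nat) \<Rightarrow> (nat \<Rightarrow> nat) \<Rightarrow> bool" where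
  "king_adjacent n x y \<longleftrightarrow> (\<forall>j<n. x j \<le> y j + 1 \<and> y j \<le> x j + 1)"

definition king_connected :: "nat \<Rightarrow> (nat \<Rightarrow> nat) set \<Rightarrow> (nat \<Rightarrow> nat) \<Rightarrow> (nat \<Rightarrow> nat) \<Rightarrow> bool" where
  "king_connected n S = (\<lambda>x y. x \<in> S \<and> y \<in> S \<and> king_adjacent n x y)\<^sup>*\<^sup>*"

lemma l1dist_le_if_king_adjacent:
  assumes "king_adjacent n x y"
  shows "l1dist n x y \<le> real n"
proof -
  have "l1dist n x y \<le> (\<Sum>j<n. 1)"
    unfolding l1dist_def using assms by (intro sum_mono) (auto simp: king_adjacent_def)
  then show ?thesis
    by simp
qed

lemma king_connected_in:
  "king_connected n S a b \<Longrightarrow> a \<in> S \<Longrightarrow> b \<in> S"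
  unfolding king_connected_def by (induction rule: rtranclp_induct) auto

lemma r_cube_dist_less_if_king_adjacent:
  assumes cube: "r_cube X r n k f" and "n \<ge> 1" "r > 0"
    and "x \<in> grid n k" "y \<in> grid n k" "king_adjacent n x y"
  shows "dist (f x) (f y) < real n * r"
proof (cases "x = y")
  case False
  have "dist (f x) (f y) < r * l1dist n x y"
    using r_cube_dist_less_l1dist[OF cube] assms False by blast
  also have "\<dots> \<le> real n * r"
    using l1dist_le_if_king_adjacent[OF assms(6)] \<open>r > 0\<close> by (simp add: mult.commute)
  finally show ?thesis .
qed (use assms in simp)

lemma king_adjacent_if_close_to_triples:
  assumes "\<forall>j<n. w j \<le> 3 * p j + 2 \<and> 3 * p j \<le> w j + 2"
    and "\<forall>j<n. w j \<le> 3 * a j + 2 \<and> 3 * a j \<le> w j + 2"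
  shows "king_adjacent n p a"
  unfolding king_adjacent_def
proof (intro allI impI)
  fix j
  assume "j < n"
  then have "w j \<le> 3 * p j + 2 \<and> 3 * p j \<le> w j + 2" "w j \<le> 3 * a j + 2 \<and> 3 * a j \<le> w j + 2"
    using assms by blast+
  then show "p j \<le> a j + 1 \<and> a j \<le> p j + 1"
    by presburger
qed

lemma closed_colour_sets_reach_far_face:
  fixes c :: "(nat \<Rightarrow> nat) \<Rightarrow> nat" and P :: "nat \<Rightarrow> (nat \<Rightarrow> nat) set"
  assumes "k \<ge> 1" and colours: "\<forall>a\<in>grid n k. c a < n"
    and zero_face: "\<And>i a. i < n \<Longrightarrow> a \<in> grid n k \<Longrightarrow> c a = i \<Longrightarrow> a i = 0 \<Longrightarrow> a \<in> P i"
    and closed: "\<And>i p a. p \<in> P i \<Longrightarrow> a \<in> grid n k \<Longrightarrow> c a = i \<Longrightarrow> king_adjacent n p a \<Longrightarrow> a \<in> P i"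
  shows "\<exists>i<n. \<exists>b\<in>P i. b i = k"
proof (rule ccontr)
  assume far_face: "\<not> ?thesis"
  define near where "near w p \<longleftrightarrow> (\<forall>j<n. w j \<le> 3 * p j + 2 \<and> 3 * p j \<le> w j + 2)" for w p :: "nat \<Rightarrow> nat"
  \<comment> \<open>Kuhn's lemma is applied to the grid refined by the factor 3: each cell of the refined grid
    lies within distance 2 of the single coarse point a below, so for i = c a the labels of
    coordinate i are constant on the cell.\<close>
  define label where "label w i =
    (if w i = 0 then 0 else if w i = 3 * k then 1 else if \<exists>p\<in>P i. near w p then 0 else 1::nat)" for w i
  obtain q where "\<forall>i<n. q i < 3 * k"
    and q: "\<forall>i<n. \<exists>r s. (\<forall>j<n. q j \<le> r j \<and> r j \<le> q j + 1) \<and> (\<forall>j<n. q j \<le> s j \<and> s j \<le> q j + 1)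
      \<and> label r i \<noteq> label s i"
    by (rule kuhn_lemma[of "3 * k" n label]) (use \<open>k \<ge> 1\<close> in \<open>auto simp: label_def\<close>)
  define a where "a j = (if j < n then (q j + 1) div 3 else 0)" for j
  have a: "a \<in> grid n k"
    using \<open>\<forall>i<n. q i < 3 * k\<close> unfolding grid_def a_def by auto
  define i where "i = c a"
  have i: "i < n"
    using colours a i_def by auto
  have "label w i = (if a \<in> P i then 0 else 1)" if "\<forall>j<n. q j \<le> w j \<and> w j \<le> q j + 1" for w
  proof -
    have "near w a"
      using that unfolding near_def a_def by auto
    show ?thesis
    proof (cases "a \<in> P i")
      case True
      have "w i \<noteq> 3 * k"
        using \<open>near w a\<close> a i far_face True unfolding near_def grid_def by fastforce
      then show ?thesis
        using \<open>near w a\<close> True unfolding label_def by auto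
    next
      case False
      have "w i \<noteq> 0"
        using \<open>near w a\<close> zero_face[OF i a i_def[symmetric]] i False unfolding near_def by force
      moreover have "\<not> near w p" if "p \<in> P i" for p
      proof
        assume "near w p"
        then have "king_adjacent n p a"
          using \<open>near w a\<close> unfolding near_def by (rule king_adjacent_if_close_to_triples)
        then show False
          using closed[OF that a i_def[symmetric]] False by blast
      qed
      ultimately show ?thesis
        using False unfolding label_def by auto
    qed
  qed
  then show False
    using q i by metis
qed

lemma grid_colouring_king_crossing:
  fixes c :: "(nat \<Rightarrow> nat) \<Rightarrow> nat"
  assumes "k \<ge> 1" and "\<forall>a\<in>grid n k. c a < n"
  shows "\<exists>i<n. \<exists>a b. a \<in> grid n k \<and> c a = i \<and> a i = 0 \<and> b i = k
    \<and> king_connected n {x \<in> grid n k. c x = i} a b"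
proof -
  define S where "S i = {x \<in> grid n k. c x = i}" for i
  define P where "P i = {b. \<exists>a\<in>S i. a i = 0 \<and> king_connected n (S i) a b}" for i
  have "\<exists>i<n. \<exists>b\<in>P i. b i = k"
  proof (rule closed_colour_sets_reach_far_face[OF assms])
    show "a \<in> P i" if "a \<in> grid n k" "c a = i" "a i = 0" for i a
      using that unfolding P_def S_def king_connected_def by blast
    show "a \<in> P i" if "p \<in> P i" "a \<in> grid n k" "c a = i" "king_adjacent n p a" for i p a
    proof -
      obtain a0 where "a0 \<in> S i" "a0 i = 0" "king_connected n (S i) a0 p"
        using \<open>p \<in> P i\<close> unfolding P_def by blast
      moreover have "p \<in> S i"
        using king_connected_in calculation by blast
      ultimately show ?thesis
        using that unfolding P_def S_def king_connected_def
        by (blast intro: rtranclp.rtrancl_into_rtrancl)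
    qed
  qed
  then show ?thesis
    unfolding P_def S_def by blast
qed

lemma dist_le_ediam_r_component:
  "y \<in> r_component Y r x \<Longrightarrow> ennreal (dist x y) \<le> ediam (r_component Y r x)"
  unfolding ediam_def by (rule SUP_upper2[of "(x, y)"]) (auto simp: r_component_def)

lemma r_cube_king_connected_r_component:
  assumes cube: "r_cube X r n k f" and "n \<ge> 1" "r > 0"
    and "S \<subseteq> grid n k" "f ` S \<subseteq> Y" "king_connected n S a b"
  shows "f b \<in> r_component Y (real n * r) (f a)"
  using assms(6) unfolding king_connected_def
proof (induction rule: rtranclp_induct)
  case base
  then show ?case
    by (simp add: r_component_def)
next
  case (step y z)
  then have "f y \<in> Y \<and> f z \<in> Y \<and> dist (f y) (f z) < real n * r"
    using r_cube_dist_less_if_king_adjacent[OF cube] assms by blast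
  with step.IH show ?case
    unfolding r_component_def by (auto intro: rtranclp.rtrancl_into_rtrancl)
qed

lemma control_function_colouring:
  assumes "control_function X m D" "\<rho> > 0"
  obtains U :: "nat \<Rightarrow> 'a::metric_space set" and c :: "'a \<Rightarrow> nat"
  where "\<And>x. x \<in> X \<Longrightarrow> c x \<le> m \<and> x \<in> U (c x)"
    and "\<And>i x. i \<le> m \<Longrightarrow> x \<in> U i \<Longrightarrow> ediam (r_component (U i) \<rho> x) \<le> D \<rho>"
proof -
  obtain U :: "nat \<Rightarrow> 'a set" where "(\<forall>i\<le>m. U i \<subseteq> X) \<and> (\<Union>i\<le>m. U i) = X
      \<and> (\<forall>x\<in>X. \<exists>i\<le>m. ball x \<rho> \<inter> X \<subseteq> U i)
      \<and> (\<forall>i\<le>m. \<forall>x\<in>U i. ediam (r_component (U i) \<rho> x) \<le> D \<rho>)"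
    using assms(1)[unfolded control_function_def, rule_format, OF assms(2)] by (rule exE)
  then have cover: "(\<Union>i\<le>m. U i) = X"
    and diam: "\<forall>i\<le>m. \<forall>x\<in>U i. ediam (r_component (U i) \<rho> x) \<le> D \<rho>"
    by blast+
  define c where "c x = (SOME i. i \<le> m \<and> x \<in> U i)" for x
  have "c x \<le> m \<and> x \<in> U (c x)" if "x \<in> X" for x
  proof -
    have "\<exists>i. i \<le> m \<and> x \<in> U i"
      using cover that by blast
    then show ?thesis
      unfolding c_def by (rule someI_ex)
  qed
  with diam show ?thesis
    using that by blast
qed

lemma r_cube_far_pair:
  assumes cube: "r_cube X r n k f" and "n \<ge> 1" "r > 0"
    and control: "control_function X (n - 1) D" and "k \<ge> 1"
  obtains a b where "a \<in> grid n k" "b \<in> grid n k" "a \<noteq> b" "real k \<le> l1dist n a b"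
    "ennreal (dist (f a) (f b)) \<le> D (real n * r)"
proof -
  have "real n * r > 0"
    using assms(2,3) by simp
  then obtain U c where c: "\<And>x. x \<in> X \<Longrightarrow> c x \<le> n - 1 \<and> x \<in> U (c x)"
    and diam: "\<And>i x. i \<le> n - 1 \<Longrightarrow> x \<in> U i \<Longrightarrow> ediam (r_component (U i) (real n * r) x) \<le> D (real n * r)"
    using control_function_colouring[OF control] by metis
  have f_X: "f a \<in> X" if "a \<in> grid n k" for a
    using cube that by (simp add: r_cube_def)
  then have "\<forall>a\<in>grid n k. c (f a) < n"
    using c \<open>n \<ge> 1\<close> by fastforce
  then obtain i a b where i: "i < n" and a: "a \<in> grid n k" "c (f a) = i" "a i = 0" and "b i = k"
    and path: "king_connected n {x \<in> grid n k. c (f x) = i} a b"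
    using grid_colouring_king_crossing[of k n "c \<circ> f"] \<open>k \<ge> 1\<close> by auto
  have "b \<in> grid n k" and "a \<noteq> b"
    using king_connected_in[OF path] a \<open>b i = k\<close> \<open>k \<ge> 1\<close> by auto
  have "f ` {x \<in> grid n k. c (f x) = i} \<subseteq> U i"
    using c f_X by fastforce
  then have "f b \<in> r_component (U i) (real n * r) (f a)"
    using r_cube_king_connected_r_component[OF cube assms(2,3) _ _ path] by blast
  then have "ennreal (dist (f a) (f b)) \<le> D (real n * r)"
    using dist_le_ediam_r_component diam[of i "f a"] i a c f_X by (meson order_trans)
  moreover have "real k \<le> l1dist n a b"
    using coordinate_dist_le_l1dist[OF i, of a b] a(3) \<open>b i = k\<close> by simp
  ultimately show ?thesis
    using that a(1) \<open>b \<in> grid n k\<close> \<open>a \<noteq> b\<close> by blast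
qed

lemma lip_inv_eq_top:
  assumes "a \<in> grid n k" "b \<in> grid n k" "a \<noteq> b" "f a = f b"
  shows "lip_inv n k f = \<infinity>"
proof -
  have "l1dist n a b > 0"
    using l1dist_eq_0_iff_on_grid[OF assms(1,2)] assms(3) l1dist_def
    by (metis abs_ge_zero order_less_le sum_nonneg)
  then have "{L. \<forall>a\<in>grid n k. \<forall>b\<in>grid n k. ennreal (l1dist n a b) \<le> L * ennreal (dist (f a) (f b))} = {}"
    using assms by force
  then show ?thesis
    unfolding lip_inv_def by (simp only: Inf_empty infinity_ennreal_def)
qed

lemma l1dist_le_lip_inv_mult_dist:
  assumes "a \<in> grid n k" "b \<in> grid n k" "f a \<noteq> f b"
  shows "ennreal (l1dist n a b) \<le> lip_inv n k f * ennreal (dist (f a) (f b))"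
proof -
  let ?d = "ennreal (dist (f a) (f b))"
  have d: "?d > 0" "?d \<noteq> \<infinity>"
    using assms(3) by simp_all
  have "ennreal (l1dist n a b) / ?d \<le> lip_inv n k f"
    unfolding lip_inv_def
  proof (rule Inf_greatest)
    fix L
    assume "L \<in> {L. \<forall>a\<in>grid n k. \<forall>b\<in>grid n k. ennreal (l1dist n a b) \<le> L * ennreal (dist (f a) (f b))}"
    then have "ennreal (l1dist n a b) \<le> ?d * L"
      using assms(1,2) by (simp add: mult.commute)
    then show "ennreal (l1dist n a b) / ?d \<le> L"
      by (rule divide_le_posI_ennreal[OF d(1)])
  qed
  have "ennreal (l1dist n a b) = ennreal (l1dist n a b) / ?d * ?d"
    using d by (simp add: ennreal_divide_times)
  also have "\<dots> \<le> lip_inv n k f * ?d"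
    by (rule mult_right_mono) (fact, simp)
  finally show ?thesis .
qed

lemma lip_inv_eq_top_or_l1dist_le:
  assumes "a \<in> grid n k" "b \<in> grid n k" "a \<noteq> b"
  shows "lip_inv n k f = \<infinity> \<or> ennreal (l1dist n a b) \<le> lip_inv n k f * ennreal (dist (f a) (f b))"
  using lip_inv_eq_top[OF assms] l1dist_le_lip_inv_mult_dist[OF assms(1,2)] by blast

theorem corollary2p4:
  fixes X :: "'a::metric_space set" and D :: "real \<Rightarrow> ennreal"
    and f :: "(nat \<Rightarrow> nat) \<Rightarrow> 'a" and n k :: nat and r :: real
  assumes "n \<ge> 1"
    and "control_function X (n - 1) D"
    and "r > 0"
    and "r_cube X r n k f"
  shows "lip_inv n k f = \<infinity> \<or> of_nat k \<le> D (real n * r) * lip_inv n k f"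
proof (cases "k = 0")
  case False
  then have "k \<ge> 1"
    by simp
  then obtain a b where a: "a \<in> grid n k" and b: "b \<in> grid n k" and "a \<noteq> b"
    and k_le: "real k \<le> l1dist n a b" and dist_le_D: "ennreal (dist (f a) (f b)) \<le> D (real n * r)"
    by (rule r_cube_far_pair[OF assms(4,1,3,2)])
  have "of_nat k \<le> ennreal (l1dist n a b)"
    using k_le by (simp add: ennreal_of_nat_eq_real_of_nat ennreal_leI)
  moreover have "lip_inv n k f * ennreal (dist (f a) (f b)) \<le> lip_inv n k f * D (real n * r)"
    using dist_le_D by (rule mult_left_mono) simp
  ultimately show ?thesis
    using lip_inv_eq_top_or_l1dist_le[OF a b \<open>a \<noteq> b\<close>, of f] by (auto simp: mult.commute)
qed simp

end
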